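(* Fix $I\ge 2$, $\rho\in(0,1)$, $\varepsilon\in(0,1)$. For every $p\in\mathbb{R}$, the event $C^p_{\mathcal T}(G)\subseteq\Omega$ (the set of states in which $G$ is common $p$-believed) is the same for every information tree $\mathcal T=(F,s)$ on the agent set $\{1,\dots,I\}$ (every forest $F$ and every seeding $s$). Moreover the probability $\mathbb P_{\mathcal T}[C^p_{\mathcal T}(G)]$ is the same for every information tree $\mathcal T$.
   Context: Model. Fix an integer $I\ge2$, agents $\mathcal I=\{1,\dots,I\}$, a prior $\rho\in(0,1)$ and a loss probability $\varepsilon\in(0,1)$. A state of nature $\theta\in\{g,b\}$ has $\Pr(\theta=g)=\rho$. A forest $F$ on $\mathcal I$ is a collection of vertex-disjoint undirected trees $T^1,\dots,T^R$ (connected acyclic graphs) whose vertex sets partition $\mathcal I$; a seeding $s=(s^1,\dots,s^R)$ chooses exactly one vertex $s^r$ of each $T^r$. The pair $\mathcal T=(F,s)$ is an information tree: orient each $T^r$ away from $s^r$ and add a root $0$ (the planner) with an arc $0\to s^r$ for each $r$; this is a directed tree rooted at $0$ in which every agent has a unique direct predecessor. If $\theta=b$ no messages are sent. If $\theta=g$ the planner sends a message along each arc $0\to s^r$, and every agent who receives a message forwards it along every arc leaving her (to all her neighbours except the one she received it from). Each transmission along an arc is lost independently with probability $\varepsilon$; so given $\theta=g$, agent $i$ receives the message iff no arc on the directed path from $0$ to $i$ fails. Agent $i$ observes only $x_i\in\{y,n\}$ (received / not received). The state space is $\Omega=\{g,b\}\times\{y,n\}^I$ and $\mathbb P_{\mathcal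 T}$ is the induced probability on $\Omega$. Events: $G=\{\theta=g\}$, $Y_i=\{x_i=y\}$, $N_i=\Omega\setminus Y_i$, $Y^*=\bigcap_{i}Y_i$. Belief operators: $B^p_i(E)=\{\omega:\mathbb P_{\mathcal T}[E\mid x_i=x_i(\omega)]\ge p\}$, $B^p(E)=\bigcap_{i\in\mathcal I}B^p_i(E)$, $B^{p,0}(E)=E$, $B^{p,\ell}(E)=B^p(B^{p,\ell-1}(E))$, and $C^p_{\mathcal T}(E)=\bigcap_{\ell\ge1}B^{p,\ell}(E)$. *)

theory Defs
  imports Complex_Main "HOL-Library.FuncSet"
begin

(* Agents are 1..I; the planner is the extra root 0 (not an agent). *)
definition agents :: "nat \<Rightarrow> nat set" where
  "agents I = {1..I}"

definition is_path :: "nat set set \<Rightarrow> nat list \<Rightarrow> nat \<Rightarrow> nat \<Rightarrow> bool" where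
  "is_path E p u v \<longleftrightarrow> p \<noteq> [] \<and> hd p = u \<and> last p = v \<and> distinct p \<and>
     (\<forall>k. Suc k < length p \<longrightarrow> {p ! k, p ! Suc k} \<in> E)"

definition connected_in :: "nat set set \<Rightarrow> nat \<Rightarrow> nat \<Rightarrow> bool" where
  "connected_in E u v \<longleftrightarrow> (\<exists>p. is_path E p u v)"

definition forest :: "nat \<Rightarrow> nat set set \<Rightarrow> bool" where
  "forest I E \<longleftrightarrow>
     (\<forall>e\<in>E. \<exists>a b. a \<in> agents I \<and> b \<in> agents I \<and> a \<noteq> b \<and> e = {a, b}) \<and>
     (\<forall>u v p q. is_path E p u v \<and> is_path E q u v \<longrightarrow> p = q)"

definition seeding :: "nat \<Rightarrow> nat set set \<Rightarrow> nat set \<Rightarrow> bool" where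
  "seeding I E S \<longleftrightarrow> S \<subseteq> agents I \<and> (\<forall>i\<in>agents I. \<exists>!s. s \<in> S \<and> connected_in E s i)"

(* Information tree T = (F, s), represented by the edge set of F and the set of seeds. *)
definition info_tree :: "nat \<Rightarrow> nat set set \<Rightarrow> nat set \<Rightarrow> bool" where
  "info_tree I E S \<longleftrightarrow> forest I E \<and> seeding I E S"

(* on_path E S i j: agent j lies on the directed path from the planner 0 to agent i,
   i.e. j is on the path in F from the seed of i's tree to i.  The arcs of the directed
   path 0 -> ... -> i are exactly the arcs entering such agents j. *)
definition on_path :: "nat set set \<Rightarrow> nat set \<Rightarrow> nat \<Rightarrow> nat \<Rightarrow> bool" where
  "on_path E S i j \<longleftrightarrow> (\<exists>s\<in>S. \<exists>p. is_path E p s i \<and> j \<in> set p)"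

(* State space Omega = {g,b} x {y,n}^I: theta = True means g, x i = True means y. *)
type_synonym state = "bool \<times> (nat \<Rightarrow> bool)"

definition Omega :: "nat \<Rightarrow> state set" where
  "Omega I = UNIV \<times> (agents I \<rightarrow>\<^sub>E (UNIV :: bool set))"

(* Probability of a single state.  Each agent j has a unique incoming arc; lost j
   means that arc fails (independently, probability eps). *)
definition state_prob :: "nat \<Rightarrow> real \<Rightarrow> real \<Rightarrow> nat set set \<Rightarrow> nat set \<Rightarrow> state \<Rightarrow> real" where
  "state_prob I rho eps E S \<omega> =
     (if fst \<omega> then
        rho * (\<Sum>lost\<in>agents I \<rightarrow>\<^sub>E (UNIV :: bool set).
                 if (\<forall>i\<in>agents I. snd \<omega> i = (\<forall>j\<in>agents I. on_path E S i j \<longrightarrow> \<not> lost j))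
                 then (\<Prod>j\<in>agents I. if lost j then eps else 1 - eps) else 0)
      else (if (\<forall>i\<in>agents I. \<not> snd \<omega> i) then 1 - rho else 0))"

definition Prob :: "nat \<Rightarrow> real \<Rightarrow> real \<Rightarrow> nat set set \<Rightarrow> nat set \<Rightarrow> state set \<Rightarrow> real" where
  "Prob I rho eps E S A = (\<Sum>\<omega>\<in>A \<inter> Omega I. state_prob I rho eps E S \<omega>)"

definition cond_prob :: "nat \<Rightarrow> real \<Rightarrow> real \<Rightarrow> nat set set \<Rightarrow> nat set \<Rightarrow> state set \<Rightarrow> nat \<Rightarrow> bool \<Rightarrow> real" where
  "cond_prob I rho eps E S A i v =
     Prob I rho eps E S (A \<inter> {\<omega>. snd \<omega> i = v}) / Prob I rho eps E S {\<omega>. snd \<omega> i = v}"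

definition G_event :: "nat \<Rightarrow> state set" where
  "G_event I = {\<omega>\<in>Omega I. fst \<omega>}"

definition belief_i :: "nat \<Rightarrow> real \<Rightarrow> real \<Rightarrow> nat set set \<Rightarrow> nat set \<Rightarrow> real \<Rightarrow> nat \<Rightarrow> state set \<Rightarrow> state set" where
  "belief_i I rho eps E S p i A = {\<omega>\<in>Omega I. cond_prob I rho eps E S A i (snd \<omega> i) \<ge> p}"

definition belief :: "nat \<Rightarrow> real \<Rightarrow> real \<Rightarrow> nat set set \<Rightarrow> nat set \<Rightarrow> real \<Rightarrow> state set \<Rightarrow> state set" where
  "belief I rho eps E S p A = (\<Inter>i\<in>agents I. belief_i I rho eps E S p i A)"

definition common_belief :: "nat \<Rightarrow> real \<Rightarrow> real \<Rightarrow> nat set set \<Rightarrow> nat set \<Rightarrow> real \<Rightarrow> state set \<Rightarrow> state set" where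
  "common_belief I rho eps E S p A = (\<Inter>l\<in>{1..}. (belief I rho eps E S p ^^ l) A)"

end

theory Submission imports Defs begin

text \<open>
  Given \<open>g\<close>, an agent at depth \<open>k\<close> receives the message iff none of the \<open>k\<close> arcs on her path
  fails, which has probability \<open>(1 - \<epsilon>)^k\<close>.  Receiving reveals \<open>g\<close>; not receiving leaves a
  posterior of \<open>g\<close> which is smallest for the seeds, where it equals
  \<open>a = \<rho>\<epsilon> / (1 - \<rho> + \<rho>\<epsilon>)\<close>.  If \<open>p \<le> a\<close>, every agent always \<open>p\<close>-believes \<open>G\<close>, so
  \<open>C^p(G) = \<Omega>\<close>.  If \<open>p > a\<close>, induction on \<open>k\<close> shows that \<open>B^{p,k}(G)\<close> forces receipt by all
  agents of depth at most \<open>k\<close>: an agent whose proper ancestors all received assigns \<open>g\<close> a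
  posterior at most \<open>a\<close> when she does not receive.  Hence \<open>C^p(G) \<subseteq> Y*\<close>, and \<open>Y*\<close> is
  \<open>p\<close>-evident iff \<open>p \<le> (1 - \<epsilon>)^(I - 1)\<close>, the probability of \<open>Y*\<close> given that a seed received.
  So \<open>C^p(G)\<close> is \<open>\<Omega>\<close>, \<open>Y*\<close> or \<open>\<emptyset>\<close>, with probability \<open>1\<close>, \<open>\<rho>(1 - \<epsilon>)^I\<close> or \<open>0\<close>, according
  to thresholds in which the tree does not appear.
\<close>

definition seed_posterior :: "real \<Rightarrow> real \<Rightarrow> real" where
  "seed_posterior rho eps = rho * eps / (1 - rho + rho * eps)"

lemma divide_add_self_mono:
  fixes c x y :: real
  assumes "0 < c" "0 \<le> y" "y \<le> x"
  shows "y / (c + y) \<le> x / (c + x)"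
proof -
  have "y * (c + x) \<le> x * (c + y)"
    using mult_right_mono[OF \<open>y \<le> x\<close>, of c] assms by (simp add: algebra_simps)
  then show ?thesis using assms by (simp add: divide_simps)
qed

lemma seed_posterior_le:
  fixes rho eps v :: real
  assumes "0 < rho" "rho < 1" "0 < eps" "0 < v" "v \<le> 1 - eps"
  shows "seed_posterior rho eps \<le> rho * (1 - v) / ((1 - rho) + rho * (1 - v))"
  unfolding seed_posterior_def using assms
  by (intro divide_add_self_mono) auto

lemma seed_posterior_ge:
  fixes rho eps v :: real
  assumes "0 < rho" "rho < 1" "0 < eps" "eps < 1" "0 < v" "v \<le> 1"
  shows "rho * v * eps / ((1 - rho) + rho * (1 - v * (1 - eps))) \<le> seed_posterior rho eps"
proof -
  have "v * (1 - eps) \<le> 1" using assms by (intro mult_le_one) auto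
  then have pos: "(1 - rho) + rho * (1 - v * (1 - eps)) > 0" using assms by (simp add: add_pos_nonneg)
  have "v * (1 - rho + rho * eps) \<le> 1 - rho * v + rho * v * eps"
    using assms by (simp add: algebra_simps)
  then have "(rho * eps) * (v * (1 - rho + rho * eps)) \<le> (rho * eps) * (1 - rho * v + rho * v * eps)"
    using assms by (intro mult_left_mono) auto
  moreover have "1 - rho + rho * eps > 0" using assms by (simp add: add_pos_pos)
  ultimately show ?thesis
    using pos unfolding seed_posterior_def by (simp add: divide_simps algebra_simps)
qed

lemma seed_posterior_pos: "0 < rho \<Longrightarrow> rho < 1 \<Longrightarrow> 0 < eps \<Longrightarrow> 0 < seed_posterior rho eps"
  unfolding seed_posterior_def by (simp add: add_pos_pos)

lemma seed_posterior_less_one: "0 < rho \<Longrightarrow> rho < 1 \<Longrightarrow> 0 < eps \<Longrightarrow> seed_posterior rho eps < 1"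
  unfolding seed_posterior_def by (simp add: add_pos_pos divide_simps)

definition received :: "nat \<Rightarrow> state set" where
  "received i = {\<omega>. snd \<omega> i}"

definition not_received :: "nat \<Rightarrow> state set" where
  "not_received i = {\<omega>. \<not> snd \<omega> i}"

definition all_received :: "nat \<Rightarrow> state set" where
  "all_received I = {\<omega>\<in>Omega I. \<forall>i\<in>agents I. snd \<omega> i}"

locale info_model =
  fixes I :: nat and rho eps :: real and E :: "nat set set" and S :: "nat set"
  assumes I_pos: "I \<ge> 1" and rho_pos: "0 < rho" and rho_less: "rho < 1"
    and eps_pos: "0 < eps" and eps_less: "eps < 1" and tree: "info_tree I E S"
begin

lemma finite_agents: "finite (agents I)"
  by (simp add: agents_def)

lemma agents_nonempty: "agents I \<noteq> {}"
  using I_pos by (auto simp: agents_def)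

subsection \<open>Loss patterns\<close>

text \<open>A loss pattern \<open>l\<close> records for every agent whether the arc entering her fails.\<close>

definition loss_patterns :: "(nat \<Rightarrow> bool) set" where
  "loss_patterns = agents I \<rightarrow>\<^sub>E (UNIV :: bool set)"

definition loss_weight :: "(nat \<Rightarrow> bool) \<Rightarrow> real" where
  "loss_weight l = (\<Prod>j\<in>agents I. if l j then eps else 1 - eps)"

definition loss_prob :: "((nat \<Rightarrow> bool) \<Rightarrow> bool) \<Rightarrow> real" where
  "loss_prob \<phi> = (\<Sum>l\<in>loss_patterns. loss_weight l * (if \<phi> l then 1 else 0))"

definition no_loss_on :: "nat set \<Rightarrow> (nat \<Rightarrow> bool) \<Rightarrow> bool" where
  "no_loss_on T l \<longleftrightarrow> (\<forall>j\<in>T. \<not> l j)"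

lemma loss_prob_no_loss_on:
  assumes "T \<subseteq> agents I"
  shows "loss_prob (no_loss_on T) = (1 - eps) ^ card T"
proof -
  define f where "f j b = (if b then eps else 1 - eps) * (if j \<in> T \<and> b then 0 else (1::real))" for j b
  have factor: "loss_weight l * (if no_loss_on T l then 1 else 0) = (\<Prod>j\<in>agents I. f j (l j))" for l
  proof -
    have "(\<Prod>j\<in>agents I. if j \<in> T \<and> l j then 0 else (1::real)) = (if no_loss_on T l then 1 else 0)"
      using assms finite_agents
      by (cases "no_loss_on T l") (auto simp: no_loss_on_def prod_zero_iff intro!: prod.neutral)
    then show ?thesis unfolding f_def loss_weight_def by (simp add: prod.distrib)
  qed
  have "loss_prob (no_loss_on T) = (\<Sum>l\<in>loss_patterns. \<Prod>j\<in>agents I. f j (l j))"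
    unfolding loss_prob_def using factor by simp
  also have "\<dots> = (\<Prod>j\<in>agents I. \<Sum>b\<in>UNIV. f j b)"
    unfolding loss_patterns_def by (rule prod_sum_PiE[symmetric]) (auto simp: finite_agents)
  also have "\<dots> = (\<Prod>j\<in>agents I. if j \<in> T then 1 - eps else 1)"
    by (rule prod.cong) (auto simp: UNIV_bool f_def)
  also have "\<dots> = (1 - eps) ^ card T"
    using prod.inter_restrict[OF finite_agents, of "\<lambda>_. 1 - eps" T] assms
    by (simp add: Int_absorb1)
  finally show ?thesis .
qed

lemma loss_weight_nonneg: "loss_weight l \<ge> 0"
  unfolding loss_weight_def using eps_pos eps_less by (auto intro!: prod_nonneg)

lemma loss_prob_mono: "(\<And>l. l \<in> loss_patterns \<Longrightarrow> \<phi> l \<Longrightarrow> \<psi> l) \<Longrightarrow> loss_prob \<phi> \<le> loss_prob \<psi>"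
  unfolding loss_prob_def by (rule sum_mono, rule mult_left_mono) (auto simp: loss_weight_nonneg)

lemma loss_prob_diff:
  "(\<And>l. \<phi> l \<Longrightarrow> \<psi> l) \<Longrightarrow> loss_prob (\<lambda>l. \<psi> l \<and> \<not> \<phi> l) = loss_prob \<psi> - loss_prob \<phi>"
  unfolding loss_prob_def sum_subtractf[symmetric] by (rule sum.cong) auto

lemma loss_prob_True: "loss_prob (\<lambda>_. True) = 1"
proof -
  have "no_loss_on {} = (\<lambda>_. True)" by (simp add: no_loss_on_def fun_eq_iff)
  then show ?thesis using loss_prob_no_loss_on[of "{}"] by simp
qed

lemma loss_prob_not: "loss_prob (\<lambda>l. \<not> \<phi> l) = 1 - loss_prob \<phi>"
  using loss_prob_diff[of \<phi> "\<lambda>_. True"] loss_prob_True by simp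

subsection \<open>The path of an agent\<close>

text \<open>
  \<open>path_agents i\<close> consists of the heads of the arcs on the path from the planner to \<open>i\<close>;
  its cardinality is the depth of \<open>i\<close>.
\<close>

definition path_agents :: "nat \<Rightarrow> nat set" where
  "path_agents i = {j\<in>agents I. on_path E S i j}"

lemma unique_seed: "i \<in> agents I \<Longrightarrow> \<exists>!s. s \<in> S \<and> connected_in E s i"
  using tree by (auto simp: info_tree_def seeding_def)

lemma unique_path: "is_path E p a b \<Longrightarrow> is_path E q a b \<Longrightarrow> p = q"
  using tree by (auto simp: info_tree_def forest_def)

lemma self_in_path_agents:
  assumes "i \<in> agents I"
  shows "i \<in> path_agents i"
proof -
  obtain s p where "s \<in> S" "is_path E p s i"
    using unique_seed[OF assms] by (auto simp: connected_in_def)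
  moreover from \<open>is_path E p s i\<close> have "i \<in> set p"
    by (auto simp: is_path_def dest: last_in_set)
  ultimately show ?thesis using assms by (auto simp: path_agents_def on_path_def)
qed

lemma path_agents_subset: "path_agents i \<subseteq> agents I"
  by (auto simp: path_agents_def)

lemma finite_path_agents: "finite (path_agents i)"
  using path_agents_subset finite_agents finite_subset by blast

lemma card_path_agents_bounds:
  assumes "i \<in> agents I"
  shows "1 \<le> card (path_agents i)" "card (path_agents i) \<le> I"
proof -
  show "1 \<le> card (path_agents i)"
    using self_in_path_agents[OF assms] finite_path_agents by (auto simp: Suc_le_eq card_gt_0_iff)
  have "card (path_agents i) \<le> card (agents I)"
    using path_agents_subset finite_agents by (rule card_mono[rotated])
  then show "card (path_agents i) \<le> I" by (simp add: agents_def)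
qed

lemma is_path_take:
  assumes p: "is_path E p s i" and k: "k < length p"
  shows "is_path E (take (Suc k) p) s (p ! k)"
proof -
  have "p \<noteq> []" using k by auto
  then have "hd (take (Suc k) p) = hd p" by (cases p) auto
  moreover have "last (take (Suc k) p) = p ! k"
    using k by (simp add: take_Suc_conv_app_nth)
  ultimately show ?thesis
    using p k by (auto simp: is_path_def)
qed

lemma card_path_agents_less:
  assumes i: "i \<in> agents I" and t: "t \<in> path_agents i" and "t \<noteq> i"
  shows "card (path_agents t) < card (path_agents i)"
proof -
  from t obtain s p where s: "s \<in> S" and p: "is_path E p s i" and "t \<in> set p" and tA: "t \<in> agents I"
    by (auto simp: path_agents_def on_path_def)
  then obtain k where k: "k < length p" and pk: "p ! k = t" by (auto simp: in_set_conv_nth)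
  define p' where "p' = take (Suc k) p"
  have p': "is_path E p' s t" unfolding p'_def pk[symmetric] by (rule is_path_take[OF p k])
  have in_prefix: "j \<in> set p'" if "j \<in> path_agents t" for j
  proof -
    from that obtain s' q where "s' \<in> S" and q: "is_path E q s' t" and "j \<in> set q"
      by (auto simp: path_agents_def on_path_def)
    moreover have "s' = s"
      using unique_seed[OF tA] s \<open>s' \<in> S\<close> p' q by (auto simp: connected_in_def)
    ultimately show ?thesis using p' unique_path by blast
  qed
  have "path_agents t \<subseteq> path_agents i"
  proof
    fix j assume j: "j \<in> path_agents t"
    then have "j \<in> set p" using in_prefix[OF j] by (auto simp: p'_def dest: in_set_takeD)
    then show "j \<in> path_agents i" using j s p by (auto simp: path_agents_def on_path_def)
  qed
  moreover have "i \<notin> path_agents t"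
  proof
    assume "i \<in> path_agents t"
    then have "i \<in> set p'" by (rule in_prefix)
    then obtain m where m: "m < Suc k" "m < length p" "p ! m = i"
      by (auto simp: p'_def in_set_conv_nth)
    have "p \<noteq> []" "distinct p" "p ! (length p - 1) = i"
      using p by (auto simp: is_path_def last_conv_nth)
    then have "m = length p - 1" using m nth_eq_iff_index_eq[of p m "length p - 1"] by auto
    then have "k = length p - 1" using m k by auto
    then show False using pk \<open>t \<noteq> i\<close> \<open>p ! (length p - 1) = i\<close> by simp
  qed
  ultimately have "path_agents t \<subset> path_agents i" using self_in_path_agents[OF i] by blast
  then show ?thesis using finite_path_agents by (rule psubset_card_mono[rotated])
qed

lemma exists_depth_one: "\<exists>s\<in>agents I. card (path_agents s) = 1"
proof -
  have "\<exists>s\<in>agents I. card (path_agents s) = 1" if "i \<in> agents I" for i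
    using that
  proof (induction "card (path_agents i)" arbitrary: i rule: less_induct)
    case less
    show ?case
    proof (cases "path_agents i \<subseteq> {i}")
      case True
      then have "path_agents i = {i}" using self_in_path_agents[OF less.prems] by auto
      then show ?thesis using less.prems by (intro bexI[of _ i]) auto
    next
      case False
      then obtain t where "t \<in> path_agents i" "t \<noteq> i" by auto
      then show ?thesis
        using less card_path_agents_less[OF less.prems] path_agents_subset by blast
    qed
  qed
  then show ?thesis using agents_nonempty by blast
qed

definition signal :: "(nat \<Rightarrow> bool) \<Rightarrow> nat \<Rightarrow> bool" where
  "signal l = restrict (\<lambda>i. no_loss_on (path_agents i) l) (agents I)"

definition bad_state :: state where
  "bad_state = (False, restrict (\<lambda>_. False) (agents I))"

definition Pr :: "state set \<Rightarrow> real" where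
  "Pr Z = Prob I rho eps E S Z"

lemma finite_Omega: "finite (Omega I)"
proof -
  have "Omega I = {True, False} \<times> (agents I \<rightarrow>\<^sub>E (UNIV :: bool set))"
    by (auto simp: Omega_def)
  then show ?thesis by (simp add: finite_PiE finite_agents)
qed

lemma bad_state_in_Omega: "bad_state \<in> Omega I"
  by (auto simp: bad_state_def Omega_def)

lemma signal_in_Omega: "(True, signal l) \<in> Omega I"
  by (auto simp: signal_def Omega_def)

lemma signal_apply: "i \<in> agents I \<Longrightarrow> signal l i = no_loss_on (path_agents i) l"
  by (simp add: signal_def)

lemma state_prob_eq:
  assumes "\<omega> \<in> Omega I"
  shows "state_prob I rho eps E S \<omega> =
    (if \<omega> = bad_state then 1 - rho else 0)
      + rho * (\<Sum>l\<in>loss_patterns. loss_weight l * (if \<omega> = (True, signal l) then 1 else 0))"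
proof -
  obtain th x where om: "\<omega> = (th, x)" and x: "x \<in> agents I \<rightarrow>\<^sub>E (UNIV :: bool set)"
    using assms by (cases \<omega>) (auto simp: Omega_def)
  have eq_iff: "x = y \<longleftrightarrow> (\<forall>i\<in>agents I. x i = y i)" if "y \<in> extensional (agents I)" for y
    using x that by (auto intro!: extensionalityI[of x "agents I" y] simp: PiE_iff)
  show ?thesis
  proof (cases th)
    case True
    have "(\<forall>i\<in>agents I. x i = (\<forall>j\<in>agents I. on_path E S i j \<longrightarrow> \<not> l j)) \<longleftrightarrow> x = signal l" for l
      by (subst eq_iff) (auto simp: signal_def path_agents_def no_loss_on_def)
    then show ?thesis
      using True om
      by (auto simp: state_prob_def bad_state_def loss_patterns_def loss_weight_def intro!: sum.cong)
  next
    case False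
    have "(\<forall>i\<in>agents I. \<not> x i) \<longleftrightarrow> x = restrict (\<lambda>_. False) (agents I)"
      by (subst eq_iff) auto
    then show ?thesis using False om by (auto simp: state_prob_def bad_state_def)
  qed
qed

text \<open>
  Only \<open>bad_state\<close> and the signal profiles \<open>(True, signal l)\<close> of the loss patterns carry
  probability mass, so every probability is computed on loss patterns.
\<close>

lemma Pr_eq:
  "Pr Z = (if bad_state \<in> Z then 1 - rho else 0) + rho * loss_prob (\<lambda>l. (True, signal l) \<in> Z)"
proof -
  have point: "(\<Sum>\<omega>\<in>Z \<inter> Omega I. loss_weight l * (if \<omega> = (True, signal l) then 1 else 0))
      = loss_weight l * (if (True, signal l) \<in> Z then 1 else 0)" for l
    using finite_Omega signal_in_Omega[of l] by (simp add: sum_distrib_left[symmetric] sum.delta)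
  have "Pr Z = (\<Sum>\<omega>\<in>Z \<inter> Omega I. (if \<omega> = bad_state then 1 - rho else 0))
     + rho * (\<Sum>l\<in>loss_patterns. \<Sum>\<omega>\<in>Z \<inter> Omega I.
                 loss_weight l * (if \<omega> = (True, signal l) then 1 else 0))"
    unfolding Pr_def Prob_def
    by (simp add: state_prob_eq sum.distrib sum_distrib_left sum.swap[of _ "Z \<inter> Omega I" loss_patterns])
  also have "(\<Sum>\<omega>\<in>Z \<inter> Omega I. (if \<omega> = bad_state then 1 - rho else 0))
      = (if bad_state \<in> Z then 1 - rho else 0)"
    using finite_Omega bad_state_in_Omega by (simp add: sum.delta)
  finally show ?thesis by (simp add: point loss_prob_def)
qed

lemma Pr_empty: "Pr {} = 0"
  by (simp add: Pr_def Prob_def)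

lemma Pr_Omega: "Pr (Omega I) = 1"
  using Pr_eq[of "Omega I"] bad_state_in_Omega signal_in_Omega loss_prob_True by simp

lemma Pr_Omega_Int: "Pr (Omega I \<inter> Z) = Pr Z"
  unfolding Pr_def Prob_def by (rule sum.cong) auto

lemma Pr_mono:
  assumes "Z \<subseteq> Z'"
  shows "Pr Z \<le> Pr Z'"
proof -
  have "loss_prob (\<lambda>l. (True, signal l) \<in> Z) \<le> loss_prob (\<lambda>l. (True, signal l) \<in> Z')"
    using assms by (intro loss_prob_mono) auto
  then have "rho * loss_prob (\<lambda>l. (True, signal l) \<in> Z) \<le> rho * loss_prob (\<lambda>l. (True, signal l) \<in> Z')"
    using rho_pos by simp
  moreover have "(if bad_state \<in> Z then 1 - rho else 0) \<le> (if bad_state \<in> Z' then 1 - rho else (0::real))"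
    using assms rho_less by auto
  ultimately show ?thesis using Pr_eq[of Z] Pr_eq[of Z'] by linarith
qed

lemma Pr_nonneg: "Pr Z \<ge> 0"
  using Pr_mono[of "{}" Z] Pr_empty by simp

lemma Pr_received:
  assumes "i \<in> agents I"
  shows "Pr (received i) = rho * (1 - eps) ^ card (path_agents i)"
    and "Pr (G_event I \<inter> received i) = rho * (1 - eps) ^ card (path_agents i)"
  using assms Pr_eq[of "received i"] Pr_eq[of "G_event I \<inter> received i"] signal_in_Omega
    loss_prob_no_loss_on[OF path_agents_subset]
  by (simp_all add: received_def signal_apply bad_state_def G_event_def)

lemma Pr_not_received:
  assumes "i \<in> agents I"
  shows "Pr (not_received i) = (1 - rho) + rho * (1 - (1 - eps) ^ card (path_agents i))"
    and "Pr (G_event I \<inter> not_received i) = rho * (1 - (1 - eps) ^ card (path_agents i))"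
  using assms Pr_eq[of "not_received i"] Pr_eq[of "G_event I \<inter> not_received i"] signal_in_Omega
    loss_prob_no_loss_on[OF path_agents_subset] loss_prob_not[of "no_loss_on (path_agents i)"]
  by (simp_all add: not_received_def signal_apply bad_state_def G_event_def)

lemma Pr_all_received: "Pr (all_received I) = rho * (1 - eps) ^ I"
proof -
  have "(True, signal l) \<in> all_received I \<longleftrightarrow> (\<forall>i\<in>agents I. no_loss_on (path_agents i) l)" for l
    using signal_in_Omega by (simp add: all_received_def signal_apply)
  also have "(\<forall>i\<in>agents I. no_loss_on (path_agents i) l) \<longleftrightarrow> no_loss_on (agents I) l" for l
    using self_in_path_agents path_agents_subset unfolding no_loss_on_def by blast
  moreover have "bad_state \<notin> all_received I"
    using agents_nonempty by (auto simp: bad_state_def all_received_def)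
  ultimately show ?thesis
    using Pr_eq[of "all_received I"] loss_prob_no_loss_on[of "agents I"] by (simp add: agents_def)
qed

lemma Pr_received_pos: "i \<in> agents I \<Longrightarrow> Pr (received i) > 0"
  using Pr_received rho_pos eps_less by simp

lemma Pr_not_received_pos:
  assumes "i \<in> agents I"
  shows "Pr (not_received i) > 0"
proof -
  have "(1 - eps) ^ card (path_agents i) \<le> 1"
    using eps_pos eps_less by (intro power_le_one) auto
  then show ?thesis using Pr_not_received(1)[OF assms] rho_pos rho_less
    by (simp add: add_pos_nonneg)
qed

text \<open>
  If all proper ancestors of \<open>i\<close> received, then \<open>i\<close> can miss the message only through a loss on
  the arc entering her.
\<close>

lemma Pr_not_received_le:
  assumes i: "i \<in> agents I" and Z: "Z \<subseteq> {\<omega>. \<forall>t\<in>path_agents i - {i}. snd \<omega> t}"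
    and T: "path_agents i - {i} \<noteq> {}"
  shows "Pr (Z \<inter> not_received i)
    \<le> rho * ((1 - eps) ^ card (path_agents i - {i}) - (1 - eps) ^ card (path_agents i))"
proof -
  define T where "T = path_agents i - {i}"
  have TA: "T \<subseteq> agents I" using path_agents_subset by (auto simp: T_def)
  have "bad_state \<notin> Z"
  proof
    assume "bad_state \<in> Z"
    obtain t where t: "t \<in> T" using T by (auto simp: T_def)
    then have "snd bad_state t" using Z \<open>bad_state \<in> Z\<close> unfolding T_def by blast
    then show False using t TA by (auto simp: bad_state_def)
  qed
  then have "Pr (Z \<inter> not_received i) = rho * loss_prob (\<lambda>l. (True, signal l) \<in> Z \<inter> not_received i)"
    using Pr_eq by simp
  also have "loss_prob (\<lambda>l. (True, signal l) \<in> Z \<inter> not_received i)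
      \<le> loss_prob (\<lambda>l. no_loss_on T l \<and> \<not> no_loss_on (path_agents i) l)"
  proof (rule loss_prob_mono)
    fix l assume l: "(True, signal l) \<in> Z \<inter> not_received i"
    have "no_loss_on (path_agents t) l" if "t \<in> T" for t
      using l Z that TA by (force simp: T_def signal_apply)
    then have "no_loss_on T l"
      using self_in_path_agents TA by (force simp: no_loss_on_def)
    then show "no_loss_on T l \<and> \<not> no_loss_on (path_agents i) l"
      using l i by (simp add: not_received_def signal_apply)
  qed
  also have "loss_prob (\<lambda>l. no_loss_on T l \<and> \<not> no_loss_on (path_agents i) l)
      = loss_prob (no_loss_on T) - loss_prob (no_loss_on (path_agents i))"
    by (rule loss_prob_diff) (auto simp: no_loss_on_def T_def)
  also have "\<dots> = (1 - eps) ^ card T - (1 - eps) ^ card (path_agents i)"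
    using loss_prob_no_loss_on TA path_agents_subset by simp
  finally show ?thesis using rho_pos by (simp add: T_def)
qed

lemma cond_prob_True: "cond_prob I rho eps E S Z i True = Pr (Z \<inter> received i) / Pr (received i)"
  by (simp add: cond_prob_def Pr_def received_def)

lemma cond_prob_False:
  "cond_prob I rho eps E S Z i False = Pr (Z \<inter> not_received i) / Pr (not_received i)"
  by (simp add: cond_prob_def Pr_def not_received_def)

lemma cond_prob_mono:
  "Z \<subseteq> Z' \<Longrightarrow> cond_prob I rho eps E S Z i v \<le> cond_prob I rho eps E S Z' i v"
  unfolding cond_prob_def Pr_def[symmetric]
  by (intro divide_right_mono Pr_mono Pr_nonneg) auto

lemma cond_prob_G_received:
  "i \<in> agents I \<Longrightarrow> cond_prob I rho eps E S (G_event I) i True = 1"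
  using Pr_received[of i] Pr_received_pos[of i] rho_pos eps_less
  by (simp add: cond_prob_True Int_commute)

lemma cond_prob_G_not_received:
  "i \<in> agents I \<Longrightarrow> cond_prob I rho eps E S (G_event I) i False
     = rho * (1 - (1 - eps) ^ card (path_agents i))
       / ((1 - rho) + rho * (1 - (1 - eps) ^ card (path_agents i)))"
  using Pr_not_received[of i] by (simp add: cond_prob_False Int_commute)

lemma cond_prob_all_received:
  assumes "i \<in> agents I"
  shows "cond_prob I rho eps E S (all_received I) i True = (1 - eps) ^ (I - card (path_agents i))"
    and "cond_prob I rho eps E S (all_received I) i False = 0"
proof -
  have "all_received I \<inter> received i = all_received I" "all_received I \<inter> not_received i = {}"
    using assms by (auto simp: all_received_def received_def not_received_def)
  moreover have "(1 - eps) ^ I / (1 - eps) ^ card (path_agents i) = (1 - eps) ^ (I - card (path_agents i))"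
    using eps_less card_path_agents_bounds[OF assms] by (simp add: power_diff)
  ultimately show "cond_prob I rho eps E S (all_received I) i True = (1 - eps) ^ (I - card (path_agents i))"
    "cond_prob I rho eps E S (all_received I) i False = 0"
    using rho_pos Pr_received(1)[OF assms]
    by (simp_all add: cond_prob_True cond_prob_False Pr_all_received Pr_empty)
qed

lemma cond_prob_not_received_le_seed_posterior:
  assumes i: "i \<in> agents I" and depth: "card (path_agents i) \<ge> 2"
    and Z: "Z \<subseteq> {\<omega>. \<forall>t\<in>path_agents i - {i}. snd \<omega> t}"
  shows "cond_prob I rho eps E S Z i False \<le> seed_posterior rho eps"
proof -
  define m where "m = card (path_agents i - {i})"
  have k: "card (path_agents i) = Suc m"
    using self_in_path_agents[OF i] finite_path_agents card_path_agents_bounds(1)[OF i]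
    by (simp add: m_def)
  have "path_agents i - {i} \<noteq> {}"
    using depth k card_gt_0_iff[of "path_agents i - {i}"] by (simp add: m_def)
  then have "Pr (Z \<inter> not_received i) \<le> rho * (1 - eps) ^ m * eps"
    using Pr_not_received_le[OF i Z] k by (simp add: m_def algebra_simps)
  then have "cond_prob I rho eps E S Z i False \<le> rho * (1 - eps) ^ m * eps / Pr (not_received i)"
    unfolding cond_prob_False using Pr_nonneg by (rule divide_right_mono)
  also have "\<dots> = rho * (1 - eps) ^ m * eps / ((1 - rho) + rho * (1 - (1 - eps) ^ m * (1 - eps)))"
    using Pr_not_received(1)[OF i] k by (simp add: mult_ac)
  also have "\<dots> \<le> seed_posterior rho eps"
  proof (rule seed_posterior_ge)
    show "0 < (1 - eps) ^ m" "(1 - eps) ^ m \<le> 1"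
      using eps_pos eps_less by (simp_all add: power_le_one)
  qed (use rho_pos rho_less eps_pos eps_less in auto)
  finally show ?thesis .
qed

lemma mem_belief:
  "\<omega> \<in> belief I rho eps E S p Z \<longleftrightarrow>
     \<omega> \<in> Omega I \<and> (\<forall>i\<in>agents I. cond_prob I rho eps E S Z i (snd \<omega> i) \<ge> p)"
  using agents_nonempty by (auto simp: belief_def belief_i_def)

lemma belief_mono:
  assumes "Z \<subseteq> Z'"
  shows "belief I rho eps E S p Z \<subseteq> belief I rho eps E S p Z'"
proof
  fix \<omega> assume "\<omega> \<in> belief I rho eps E S p Z"
  then show "\<omega> \<in> belief I rho eps E S p Z'"
    using cond_prob_mono[OF assms] by (auto simp: mem_belief intro: order_trans)
qed

lemma belief_received:
  assumes "\<omega> \<in> belief I rho eps E S p Z" "i \<in> agents I" "cond_prob I rho eps E S Z i False < p"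
  shows "\<omega> \<in> received i"
  using assms by (cases "snd \<omega> i") (auto simp: mem_belief received_def)

lemma common_belief_subset_iter:
  "l \<ge> 1 \<Longrightarrow> common_belief I rho eps E S p Z \<subseteq> (belief I rho eps E S p ^^ l) Z"
  unfolding common_belief_def by auto

lemma evident_subset_common_belief:
  assumes "Z \<subseteq> belief I rho eps E S p A" "Z \<subseteq> belief I rho eps E S p Z"
  shows "Z \<subseteq> common_belief I rho eps E S p A"
proof -
  let ?B = "belief I rho eps E S p"
  have iter: "Z \<subseteq> (?B ^^ Suc l) A" for l
  proof (induction l)
    case 0
    show ?case using assms(1) by simp
  next
    case (Suc l)
    then have "?B Z \<subseteq> ?B ((?B ^^ Suc l) A)" by (rule belief_mono)
    then show ?case using order_trans[OF assms(2)] by simp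
  qed
  show ?thesis unfolding common_belief_def
  proof (intro subsetI INT_I)
    fix \<omega> and l :: nat assume "\<omega> \<in> Z" "l \<in> {1..}"
    then show "\<omega> \<in> (?B ^^ l) A" using iter[of "l - 1"] by (cases l) auto
  qed
qed

subsection \<open>The three regimes\<close>

lemma common_belief_G_eq_Omega:
  assumes p: "p \<le> seed_posterior rho eps"
  shows "common_belief I rho eps E S p (G_event I) = Omega I"
proof
  let ?B = "belief I rho eps E S p"
  have p1: "p < 1" using p seed_posterior_less_one rho_pos rho_less eps_pos by fastforce
  have "Omega I \<subseteq> ?B (G_event I)"
  proof
    fix \<omega> assume om: "\<omega> \<in> Omega I"
    have "cond_prob I rho eps E S (G_event I) i v \<ge> p" if i: "i \<in> agents I" for i v
    proof (cases v)
      case False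
      have "(1 - eps) ^ card (path_agents i) \<le> (1 - eps) ^ 1"
        using eps_pos eps_less card_path_agents_bounds(1)[OF i] by (intro power_decreasing) auto
      then have "seed_posterior rho eps \<le> cond_prob I rho eps E S (G_event I) i False"
        using rho_pos rho_less eps_pos eps_less
        by (simp add: cond_prob_G_not_received[OF i] seed_posterior_le)
      then show ?thesis using False p by simp
    qed (use p1 cond_prob_G_received[OF i] in simp)
    then show "\<omega> \<in> ?B (G_event I)" using om by (simp add: mem_belief)
  qed
  moreover have "Omega I \<subseteq> ?B (Omega I)"
  proof
    fix \<omega> assume "\<omega> \<in> Omega I"
    moreover have "cond_prob I rho eps E S (Omega I) i v = 1" if "i \<in> agents I" for i v
      using Pr_received_pos[OF that] Pr_not_received_pos[OF that]
      by (cases v) (simp_all add: cond_prob_True cond_prob_False Pr_Omega_Int)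
    ultimately show "\<omega> \<in> ?B (Omega I)" using p1 by (simp add: mem_belief)
  qed
  ultimately show "Omega I \<subseteq> common_belief I rho eps E S p (G_event I)"
    by (rule evident_subset_common_belief)
  show "common_belief I rho eps E S p (G_event I) \<subseteq> Omega I"
  proof
    fix \<omega> assume "\<omega> \<in> common_belief I rho eps E S p (G_event I)"
    then have "\<omega> \<in> ?B (G_event I)" using common_belief_subset_iter[of 1] by auto
    then show "\<omega> \<in> Omega I" by (simp add: mem_belief)
  qed
qed

lemma iter_belief_G_subset_received:
  assumes p: "seed_posterior rho eps < p"
  shows "i \<in> agents I \<Longrightarrow> card (path_agents i) \<le> Suc l \<Longrightarrow>
    (belief I rho eps E S p ^^ Suc l) (G_event I) \<subseteq> received i"
proof (induction l arbitrary: i)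
  case 0
  then have "card (path_agents i) = 1" using card_path_agents_bounds(1)[of i] by simp
  then have "cond_prob I rho eps E S (G_event I) i False < p"
    using p 0 by (simp add: cond_prob_G_not_received seed_posterior_def)
  then show ?case using 0 belief_received by auto
next
  case (Suc l)
  define Z where "Z = (belief I rho eps E S p ^^ Suc l) (G_event I)"
  have "cond_prob I rho eps E S Z i False < p"
  proof (cases "card (path_agents i) \<le> Suc l")
    case True
    then have "Z \<inter> not_received i = {}"
      using Suc.IH[OF Suc.prems(1)] by (auto simp: Z_def received_def not_received_def)
    then show ?thesis
      using p seed_posterior_pos rho_pos rho_less eps_pos
      by (simp add: cond_prob_False Pr_empty) (meson less_trans)
  next
    case False
    have "Z \<subseteq> received t" if t: "t \<in> path_agents i - {i}" for t
    proof -
      have "card (path_agents t) \<le> Suc l"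
        using card_path_agents_less[OF Suc.prems(1)] t False Suc.prems(2) by fastforce
      moreover have "t \<in> agents I" using t path_agents_subset by auto
      ultimately show ?thesis using Suc.IH by (simp add: Z_def)
    qed
    then have ancestors: "Z \<subseteq> {\<omega>. \<forall>t\<in>path_agents i - {i}. snd \<omega> t}"
      by (auto simp: received_def)
    have "card (path_agents i) \<ge> 2" using False by simp
    then have "cond_prob I rho eps E S Z i False \<le> seed_posterior rho eps"
      using cond_prob_not_received_le_seed_posterior[OF Suc.prems(1) _ ancestors] by blast
    then show ?thesis using p by linarith
  qed
  then show ?case using Suc.prems(1) belief_received by (auto simp: Z_def)
qed

lemma iter_belief_G_subset_all_received:
  assumes "seed_posterior rho eps < p"
  shows "(belief I rho eps E S p ^^ I) (G_event I) \<subseteq> all_received I"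
proof
  fix \<omega> assume "\<omega> \<in> (belief I rho eps E S p ^^ I) (G_event I)"
  moreover have I: "I = Suc (I - 1)" using I_pos by simp
  ultimately have \<omega>: "\<omega> \<in> (belief I rho eps E S p ^^ Suc (I - 1)) (G_event I)" by simp
  have "\<omega> \<in> received i" if "i \<in> agents I" for i
  proof -
    have "card (path_agents i) \<le> Suc (I - 1)" using card_path_agents_bounds[OF that] by simp
    then show ?thesis using iter_belief_G_subset_received[OF assms that] \<omega> by blast
  qed
  moreover have "\<omega> \<in> Omega I" using \<omega> by (simp add: mem_belief)
  ultimately show "\<omega> \<in> all_received I" by (auto simp: all_received_def received_def)
qed

lemma common_belief_G_eq_all_received:
  assumes p1: "seed_posterior rho eps < p" and p2: "p \<le> (1 - eps) ^ (I - 1)"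
  shows "common_belief I rho eps E S p (G_event I) = all_received I"
proof
  let ?B = "belief I rho eps E S p"
  have "(1 - eps) ^ (I - 1) \<le> 1" using eps_pos eps_less by (simp add: power_le_one)
  then have "p \<le> 1" using p2 by linarith
  then have "all_received I \<subseteq> ?B (G_event I)"
    using cond_prob_G_received by (auto simp: all_received_def mem_belief)
  moreover have "all_received I \<subseteq> ?B (all_received I)"
  proof
    fix \<omega> assume \<omega>: "\<omega> \<in> all_received I"
    have "p \<le> (1 - eps) ^ (I - card (path_agents i))" if i: "i \<in> agents I" for i
    proof -
      have "(1 - eps) ^ (I - 1) \<le> (1 - eps) ^ (I - card (path_agents i))"
        using card_path_agents_bounds(1)[OF i] eps_pos eps_less by (intro power_decreasing) auto
      then show ?thesis using p2 by linarith
    qed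
    then show "\<omega> \<in> ?B (all_received I)"
      using \<omega> cond_prob_all_received(1) by (auto simp: all_received_def mem_belief)
  qed
  ultimately show "all_received I \<subseteq> common_belief I rho eps E S p (G_event I)"
    by (rule evident_subset_common_belief)
  show "common_belief I rho eps E S p (G_event I) \<subseteq> all_received I"
    using common_belief_subset_iter[OF I_pos] iter_belief_G_subset_all_received[OF p1]
    by (rule order_trans)
qed

text \<open>Above \<open>(1 - \<epsilon>)^(I - 1)\<close> not even a seed can \<open>p\<close>-believe \<open>Y*\<close>.\<close>

lemma common_belief_G_eq_empty:
  assumes p1: "seed_posterior rho eps < p" and p2: "(1 - eps) ^ (I - 1) < p"
  shows "common_belief I rho eps E S p (G_event I) = {}"
proof -
  let ?B = "belief I rho eps E S p"
  obtain s where s: "s \<in> agents I" "card (path_agents s) = 1" using exists_depth_one by blast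
  have below: "cond_prob I rho eps E S (all_received I) s v < p" for v
  proof (cases v)
    case False
    have "0 < seed_posterior rho eps" using rho_pos rho_less eps_pos by (rule seed_posterior_pos)
    then show ?thesis using False p1 cond_prob_all_received(2)[OF s(1)] by simp
  qed (use p2 s(2) cond_prob_all_received(1)[OF s(1)] in simp)
  have "?B (all_received I) = {}"
  proof (intro equals0I)
    fix \<omega> assume "\<omega> \<in> ?B (all_received I)"
    then have "p \<le> cond_prob I rho eps E S (all_received I) s (snd \<omega> s)"
      using s(1) by (simp add: mem_belief)
    then show False using below[of "snd \<omega> s"] by simp
  qed
  moreover have "common_belief I rho eps E S p (G_event I) \<subseteq> ?B ((?B ^^ I) (G_event I))"
    using common_belief_subset_iter[of "Suc I"] by simp
  moreover have "?B ((?B ^^ I) (G_event I)) \<subseteq> ?B (all_received I)"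
    using belief_mono[OF iter_belief_G_subset_all_received[OF p1]] .
  ultimately show ?thesis by blast
qed

lemma common_belief_G_eq:
  "common_belief I rho eps E S p (G_event I) =
     (if p \<le> seed_posterior rho eps then Omega I
      else if p \<le> (1 - eps) ^ (I - 1) then all_received I else {})"
  using common_belief_G_eq_Omega common_belief_G_eq_all_received common_belief_G_eq_empty
  by (simp add: not_le)

lemma Prob_common_belief_G:
  "Prob I rho eps E S (common_belief I rho eps E S p (G_event I)) =
     (if p \<le> seed_posterior rho eps then 1
      else if p \<le> (1 - eps) ^ (I - 1) then rho * (1 - eps) ^ I else 0)"
  using Pr_Omega Pr_all_received Pr_empty by (simp add: common_belief_G_eq flip: Pr_def)

end

theorem theorem1:
  fixes I :: nat and rho eps p :: real
    and E1 E2 :: "nat set set" and S1 S2 :: "nat set"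
  assumes "I \<ge> 2" and "0 < rho" and "rho < 1" and "0 < eps" and "eps < 1"
    and "info_tree I E1 S1" and "info_tree I E2 S2"
  shows "common_belief I rho eps E1 S1 p (G_event I) = common_belief I rho eps E2 S2 p (G_event I)
    \<and> Prob I rho eps E1 S1 (common_belief I rho eps E1 S1 p (G_event I))
      = Prob I rho eps E2 S2 (common_belief I rho eps E2 S2 p (G_event I))"
proof -
  have T1: "info_model I rho eps E1 S1" and T2: "info_model I rho eps E2 S2"
    using assms by (auto simp: info_model_def)
  show ?thesis
    unfolding info_model.Prob_common_belief_G[OF T1] info_model.Prob_common_belief_G[OF T2]
    by (simp only: info_model.common_belief_G_eq[OF T1] info_model.common_belief_G_eq[OF T2])
qed

end
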